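(* Let $Q_1,Q_2\in\{0,1\}^{3\times3}$ with $\mathrm{supp}(Q_1)=\{(1,2),(2,1),(3,3)\}$ and $\mathrm{supp}(Q_2)=\{(1,2),(2,3),(3,1)\}$. The class $\mathrm{Av}(\{Q_1,Q_2\})=\mathrm{Av}(Q_1)\cap\mathrm{Av}(Q_2)$ is bounded.
   Context: All matrices are binary; rows numbered top to bottom, columns left to right; $(i,j)$ is the entry in row $i$, column $j$; $\mathrm{supp}$ is the set of 1-entries; $(a,b]=\{a+1,\dots,b\}$. A pattern $P\in\{0,1\}^{k\times\ell}$ is an interval minor of $M\in\{0,1\}^{m\times n}$ if there are integers $0=r_0<\dots<r_k=m$ and $0=c_0<\dots<c_\ell=n$ such that for each 1-entry $(i,j)$ of $P$ the submatrix of $M$ on rows $(r_{i-1},r_i]$ and columns $(c_{j-1},c_j]$ contains a 1-entry; otherwise $M$ avoids $P$. For a set $\mathcal F$ of patterns, $\mathrm{Av}(\mathcal F)$ is the set of binary matrices avoiding every pattern of $\mathcal F$. $M\in\mathcal C$ is critical for $\mathcal C$ if changing any single 0-entry of $M$ into a 1-entry yields a matrix not in $\mathcal C$. A 0-run is a maximal set of consecutive 0-entries within a single row or a single column; the complexity of a line is the number of 0-runs in it. $\mathcal C$ is bounded if the supremum over all matrices critical for $\mathcal C$ of the maximum complexity of any of their lines (rows and columns) is finite. *)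

theory Defs
  imports Main
begin

text \<open>A binary matrix is represented as a triple (m, n, S): m rows, n columns,
  and S = set of 1-entries, a subset of {1..m} x {1..n} (1-indexed, row first).\<close>

type_synonym bmat = "nat \<times> nat \<times> (nat \<times> nat) set"

definition nrows :: "bmat \<Rightarrow> nat" where "nrows M = fst M"
definition ncols :: "bmat \<Rightarrow> nat" where "ncols M = fst (snd M)"
definition supp :: "bmat \<Rightarrow> (nat \<times> nat) set" where "supp M = snd (snd M)"

definition wf_bmat :: "bmat \<Rightarrow> bool" where
  "wf_bmat M \<longleftrightarrow> supp M \<subseteq> {1..nrows M} \<times> {1..ncols M}"

definition interval_minor :: "bmat \<Rightarrow> bmat \<Rightarrow> bool" where
  "interval_minor P M \<longleftrightarrow>
     (\<exists>r c :: nat \<Rightarrow> nat.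
        r 0 = 0 \<and> r (nrows P) = nrows M \<and> (\<forall>i < nrows P. r i < r (Suc i)) \<and>
        c 0 = 0 \<and> c (ncols P) = ncols M \<and> (\<forall>j < ncols P. c j < c (Suc j)) \<and>
        (\<forall>(i, j) \<in> supp P. \<exists>(a, b) \<in> supp M.
            r (i - 1) < a \<and> a \<le> r i \<and> c (j - 1) < b \<and> b \<le> c j))"

definition Av :: "bmat set \<Rightarrow> bmat set" where
  "Av F = {M. wf_bmat M \<and> (\<forall>P \<in> F. \<not> interval_minor P M)}"

definition critical :: "bmat set \<Rightarrow> bmat \<Rightarrow> bool" where
  "critical C M \<longleftrightarrow> M \<in> C \<and>
     (\<forall>i \<in> {1..nrows M}. \<forall>j \<in> {1..ncols M}. (i, j) \<notin> supp M \<longrightarrow>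
        (nrows M, ncols M, insert (i, j) (supp M)) \<notin> C)"

text \<open>Number of 0-runs (maximal runs of consecutive 0-entries) in row i / column j:
  count positions that are 0 and begin a run.\<close>
definition row_complexity :: "bmat \<Rightarrow> nat \<Rightarrow> nat" where
  "row_complexity M i = card {j \<in> {1..ncols M}. (i, j) \<notin> supp M \<and>
                              (j = 1 \<or> (i, j - 1) \<in> supp M)}"

definition col_complexity :: "bmat \<Rightarrow> nat \<Rightarrow> nat" where
  "col_complexity M j = card {i \<in> {1..nrows M}. (i, j) \<notin> supp M \<and>
                              (i = 1 \<or> (i - 1, j) \<in> supp M)}"

definition bounded_class :: "bmat set \<Rightarrow> bool" where
  "bounded_class C \<longleftrightarrow> (\<exists>B :: nat. \<forall>M. critical C M \<longrightarrow>
      (\<forall>i \<in> {1..nrows M}. row_complexity M i \<le> B) \<and>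
      (\<forall>j \<in> {1..ncols M}. col_complexity M j \<le> B))"

definition Q1 :: bmat where "Q1 = (3, 3, {(1,2), (2,1), (3,3)})"
definition Q2 :: bmat where "Q2 = (3, 3, {(1,2), (2,3), (3,1)})"

end

theory Submission
  imports Defs
begin

text \<open>Q1 and Q2 both consist of a 1-entry with two 1-entries strictly below it in
  distinct rows, one strictly to its left and one strictly to its right.  Call such a
  configuration a fork.  An interval minor embeds its pattern monotonically in both
  coordinates, so a matrix containing Q1 or Q2 contains a fork; conversely a fork yields
  Q1 or Q2 according to which of its two lower entries lies higher.  Hence Av {Q1, Q2}
  consists of the fork-free matrices, and in a critical matrix every 0-entry completes a
  fork.

  If the new entry sits directly below a 1-entry of its column, the fork cannot use it
  as its top, and as a lower entry it could be replaced by any other 1-entry of that column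
  further down; so at most one row below carries a 1 in this column, and a column has at
  most three 0-runs.  If the new entry sits directly right of a 1-entry (i, c) that is
  followed by another 1 in row i, rerouting shows that column c has a 1 below row i and
  that some other row below i has a 1 right of c.  Two such gaps on either side of a
  1-entry of row i form a fork with it, so a row has at most four 0-runs.\<close>

definition fork_free :: "(nat \<times> nat) set \<Rightarrow> bool" where
  "fork_free S \<longleftrightarrow> \<not> (\<exists>a b a1 b1 a2 b2. (a, b) \<in> S \<and> (a1, b1) \<in> S \<and> (a2, b2) \<in> S \<and>
      a < a1 \<and> a < a2 \<and> b1 < b \<and> b < b2 \<and> a1 \<noteq> a2)"

lemma fork_freeD:
  assumes "fork_free S" "p \<in> S" "q \<in> S" "r \<in> S"
    and "fst p < fst q" "fst p < fst r" "snd q < snd p" "snd p < snd r"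
  shows "fst q = fst r"
  using assms unfolding fork_free_def by (metis prod.collapse)

lemma not_fork_free_insertE:
  assumes "fork_free S" and "\<not> fork_free (insert (i, j) S)"
  obtains (top) a1 b1 a2 b2 where "(a1, b1) \<in> S" "(a2, b2) \<in> S"
      "i < a1" "i < a2" "b1 < j" "j < b2" "a1 \<noteq> a2"
    | (left) a b a2 b2 where "(a, b) \<in> S" "(a2, b2) \<in> S"
      "a < i" "a < a2" "j < b" "b < b2" "i \<noteq> a2"
    | (right) a b a1 b1 where "(a, b) \<in> S" "(a1, b1) \<in> S"
      "a < a1" "a < i" "b1 < b" "b < j" "a1 \<noteq> i"
proof -
  obtain a b a1 b1 a2 b2 where
    in_insert: "(a, b) \<in> insert (i, j) S" "(a1, b1) \<in> insert (i, j) S" "(a2, b2) \<in> insert (i, j) S"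
    and fork: "a < a1" "a < a2" "b1 < b" "b < b2" "a1 \<noteq> a2"
    using assms(2) unfolding fork_free_def by blast
  have "(a, b) = (i, j) \<or> (a1, b1) = (i, j) \<or> (a2, b2) = (i, j)"
    using assms(1) in_insert fork unfolding fork_free_def by blast
  then show ?thesis
    using that in_insert fork by auto
qed

lemma interval_minor_order_embedding:
  assumes "interval_minor P M" and "wf_bmat P"
  obtains f where "\<And>p. p \<in> supp P \<Longrightarrow> f p \<in> supp M"
    and "\<And>p q. p \<in> supp P \<Longrightarrow> q \<in> supp P \<Longrightarrow> fst p < fst q \<Longrightarrow> fst (f p) < fst (f q)"
    and "\<And>p q. p \<in> supp P \<Longrightarrow> q \<in> supp P \<Longrightarrow> snd p < snd q \<Longrightarrow> snd (f p) < snd (f q)"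
proof -
  obtain r c where
    r_mono: "\<forall>i < nrows P. r i < r (Suc i)" and c_mono: "\<forall>j < ncols P. c j < c (Suc j)"
    and blocks: "\<forall>(i, j) \<in> supp P. \<exists>(a, b) \<in> supp M.
        r (i - 1) < a \<and> a \<le> r i \<and> c (j - 1) < b \<and> b \<le> c j"
    using assms(1) unfolding interval_minor_def by blast
  have "\<exists>q. q \<in> supp M \<and> r (fst p - 1) < fst q \<and> fst q \<le> r (fst p) \<and>
      c (snd p - 1) < snd q \<and> snd q \<le> c (snd p)" if "p \<in> supp P" for p
    using bspec[OF blocks that] by (auto simp: case_prod_beta) blast
  then obtain f where f: "\<And>p. p \<in> supp P \<Longrightarrow> f p \<in> supp M \<and>
      r (fst p - 1) < fst (f p) \<and> fst (f p) \<le> r (fst p) \<and>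
      c (snd p - 1) < snd (f p) \<and> snd (f p) \<le> c (snd p)"
    by metis
  have P_box: "supp P \<subseteq> {1..nrows P} \<times> {1..ncols P}"
    using assms(2) unfolding wf_bmat_def .
  have r_le: "r i \<le> r (i' - 1)" if "i < i'" "i' \<le> nrows P" for i i'
    by (rule lift_Suc_mono_le_ivl[of "{..<nrows P}" r i "i' - 1"]) (use r_mono that in auto)
  have c_le: "c j \<le> c (j' - 1)" if "j < j'" "j' \<le> ncols P" for j j'
    by (rule lift_Suc_mono_le_ivl[of "{..<ncols P}" c j "j' - 1"]) (use c_mono that in auto)
  show ?thesis
  proof (rule that)
    show "f p \<in> supp M" if "p \<in> supp P" for p
      using f[of p] that by simp
    show "fst (f p) < fst (f q)" if "p \<in> supp P" "q \<in> supp P" "fst p < fst q" for p q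
    proof -
      have "fst q \<le> nrows P"
        using P_box that(2) by (auto simp: mem_Times_iff)
      then show ?thesis
        using f[OF that(1)] f[OF that(2)] r_le[OF that(3)] by linarith
    qed
    show "snd (f p) < snd (f q)" if "p \<in> supp P" "q \<in> supp P" "snd p < snd q" for p q
    proof -
      have "snd q \<le> ncols P"
        using P_box that(2) by (auto simp: mem_Times_iff)
      then show ?thesis
        using f[OF that(1)] f[OF that(2)] c_le[OF that(3)] by linarith
    qed
  qed
qed

lemma interval_minor_fork_free:
  assumes "interval_minor P M" "wf_bmat P" "fork_free (supp M)"
  shows "fork_free (supp P)"
proof (rule interval_minor_order_embedding[OF assms(1,2)])
  fix f
  assume f_supp: "\<And>p. p \<in> supp P \<Longrightarrow> f p \<in> supp M"
    and f_fst: "\<And>p q. p \<in> supp P \<Longrightarrow> q \<in> supp P \<Longrightarrow> fst p < fst q \<Longrightarrow> fst (f p) < fst (f q)"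
    and f_snd: "\<And>p q. p \<in> supp P \<Longrightarrow> q \<in> supp P \<Longrightarrow> snd p < snd q \<Longrightarrow> snd (f p) < snd (f q)"
  have "fst p = fst q" if "x \<in> supp P" "p \<in> supp P" "q \<in> supp P"
      "fst x < fst p" "fst x < fst q" "snd p < snd x" "snd x < snd q" for x p q
  proof (rule ccontr)
    assume "fst p \<noteq> fst q"
    then have "fst (f p) \<noteq> fst (f q)"
      using f_fst[OF that(2,3)] f_fst[OF that(3,2)] by (auto simp: nat_neq_iff)
    moreover have "fst (f p) = fst (f q)"
      using fork_freeD[OF assms(3) f_supp[OF that(1)] f_supp[OF that(2)] f_supp[OF that(3)]
          f_fst[OF that(1,2,4)] f_fst[OF that(1,3,5)] f_snd[OF that(2,1,6)] f_snd[OF that(1,3,7)]] .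
    ultimately show False ..
  qed
  then show "fork_free (supp P)"
    unfolding fork_free_def by fastforce
qed

lemma Q1_simps [simp]: "nrows Q1 = 3" "ncols Q1 = 3" "supp Q1 = {(1, 2), (2, 1), (3, 3)}"
  by (simp_all add: Q1_def nrows_def ncols_def supp_def)

lemma Q2_simps [simp]: "nrows Q2 = 3" "ncols Q2 = 3" "supp Q2 = {(1, 2), (2, 3), (3, 1)}"
  by (simp_all add: Q2_def nrows_def ncols_def supp_def)

lemma wf_bmat_Q1: "wf_bmat Q1"
  by (auto simp: wf_bmat_def)

lemma wf_bmat_Q2: "wf_bmat Q2"
  by (auto simp: wf_bmat_def)

lemma not_fork_free_Q1: "\<not> fork_free (supp Q1)"
  using fork_freeD[of "supp Q1" "(1, 2)" "(2, 1)" "(3, 3)"] by auto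

lemma not_fork_free_Q2: "\<not> fork_free (supp Q2)"
  using fork_freeD[of "supp Q2" "(1, 2)" "(3, 1)" "(2, 3)"] by auto

lemma interval_minor_3x3I:
  assumes "nrows P = 3" "ncols P = 3"
    and "0 < r" "r < r'" "r' < nrows M" "0 < c" "c < c'" "c' < ncols M"
    and "\<forall>(i, j) \<in> supp P. \<exists>(a, b) \<in> supp M.
      [0, r, r', nrows M] ! (i - 1) < a \<and> a \<le> [0, r, r', nrows M] ! i \<and>
      [0, c, c', ncols M] ! (j - 1) < b \<and> b \<le> [0, c, c', ncols M] ! j"
  shows "interval_minor P M"
  unfolding interval_minor_def
  using assms by (intro exI[of _ "(!) [0, r, r', nrows M]"] exI[of _ "(!) [0, c, c', ncols M]"])
    (simp add: less_Suc_eq numeral_3_eq_3)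

lemma not_fork_free_imp_interval_minor_Q1_or_Q2:
  assumes "wf_bmat M" and "\<not> fork_free (supp M)"
  shows "interval_minor Q1 M \<or> interval_minor Q2 M"
proof -
  obtain a b a1 b1 a2 b2 where
    pts: "(a, b) \<in> supp M" "(a1, b1) \<in> supp M" "(a2, b2) \<in> supp M"
    and fork: "a < a1" "a < a2" "b1 < b" "b < b2" "a1 \<noteq> a2"
    using assms(2) unfolding fork_free_def by blast
  have bounds: "1 \<le> a" "1 \<le> b1" "a1 \<le> nrows M" "a2 \<le> nrows M" "b2 \<le> ncols M"
    using assms(1) pts unfolding wf_bmat_def by auto
  consider "a1 < a2" | "a2 < a1"
    using fork(5) by linarith
  then show ?thesis
  proof cases
    case 1
    have "interval_minor Q1 M"
      by (rule interval_minor_3x3I[where r = a and r' = a1 and c = b1 and c' = b])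
        (use pts fork bounds 1 in \<open>auto
          intro: bexI[OF _ pts(1)] bexI[OF _ pts(2)] bexI[OF _ pts(3)]\<close>)
    then show ?thesis ..
  next
    case 2
    have "interval_minor Q2 M"
      by (rule interval_minor_3x3I[where r = a and r' = a2 and c = b1 and c' = b])
        (use pts fork bounds 2 in \<open>auto
          intro: bexI[OF _ pts(1)] bexI[OF _ pts(2)] bexI[OF _ pts(3)]\<close>)
    then show ?thesis ..
  qed
qed

lemma Av_Q1_Q2_iff: "M \<in> Av {Q1, Q2} \<longleftrightarrow> wf_bmat M \<and> fork_free (supp M)"
  using interval_minor_fork_free[OF _ wf_bmat_Q1] interval_minor_fork_free[OF _ wf_bmat_Q2]
    not_fork_free_Q1 not_fork_free_Q2 not_fork_free_imp_interval_minor_Q1_or_Q2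
  unfolding Av_def by blast

lemma critical_Av_Q1_Q2D:
  assumes "critical (Av {Q1, Q2}) M"
  shows "wf_bmat M" "fork_free (supp M)"
    and "\<And>i j. i \<in> {1..nrows M} \<Longrightarrow> j \<in> {1..ncols M} \<Longrightarrow> (i, j) \<notin> supp M \<Longrightarrow>
      \<not> fork_free (insert (i, j) (supp M))"
proof -
  show "wf_bmat M" "fork_free (supp M)"
    using assms unfolding critical_def Av_Q1_Q2_iff by auto
  fix i j
  assume ij: "i \<in> {1..nrows M}" "j \<in> {1..ncols M}" "(i, j) \<notin> supp M"
  have "wf_bmat (nrows M, ncols M, insert (i, j) (supp M))"
    using \<open>wf_bmat M\<close> ij(1,2) by (auto simp: wf_bmat_def nrows_def ncols_def supp_def)
  with ij show "\<not> fork_free (insert (i, j) (supp M))"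
    using assms unfolding critical_def Av_Q1_Q2_iff by (auto simp: supp_def)
qed

lemma row_gap_forces_entries_below:
  assumes "fork_free S" "(i, c) \<in> S" "(i, c') \<in> S" "c < c'"
    and "\<not> fork_free (insert (i, Suc c) S)"
  obtains a a' b' where "(a, c) \<in> S" "i < a" "(a', b') \<in> S" "i < a'" "c < b'" "a \<noteq> a'"
  using assms(1,5)
proof (cases rule: not_fork_free_insertE)
  case (top a1 b1 a2 b2)
  with fork_freeD[OF assms(1,2), of "(a1, b1)" "(a2, b2)"] have "b1 = c"
    by fastforce
  with top that show thesis
    by auto
next
  case (left a b a2 b2)
  with fork_freeD[OF assms(1) _ assms(2), of "(a, b)" "(a2, b2)"] show thesis
    by auto
next
  case (right a b a1 b1)
  with fork_freeD[OF assms(1) _ _ assms(2), of "(a, b)" "(a1, b1)"]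
    fork_freeD[OF assms(1) _ _ assms(3), of "(a, b)" "(a1, b1)"] assms(4) show thesis
    by (cases "b < c") auto
qed

lemma column_gap_entries_below_same_row:
  assumes "fork_free S" "(h, j) \<in> S" "\<not> fork_free (insert (Suc h, j) S)"
    and "(u, j) \<in> S" "(u', j) \<in> S" "Suc h < u" "Suc h < u'"
  shows "u = u'"
  using assms(1,3)
proof (cases rule: not_fork_free_insertE)
  case (top a1 b1 a2 b2)
  with fork_freeD[OF assms(1,2), of "(a1, b1)" "(a2, b2)"] show ?thesis
    by auto
next
  case (left a b a2 b2)
  with fork_freeD[OF assms(1) _ assms(4), of "(a, b)" "(a2, b2)"]
    fork_freeD[OF assms(1) _ assms(5), of "(a, b)" "(a2, b2)"] assms(6,7) show ?thesis
    by auto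
next
  case (right a b a1 b1)
  with fork_freeD[OF assms(1) _ _ assms(4), of "(a, b)" "(a1, b1)"]
    fork_freeD[OF assms(1) _ _ assms(5), of "(a, b)" "(a1, b1)"] assms(6,7) show ?thesis
    by auto
qed

lemma finite_enumerate_increasing:
  fixes A :: "'a::linorder set"
  assumes "finite A"
  obtains x where "\<And>k. k < card A \<Longrightarrow> x k \<in> A"
    and "\<And>k l. k < l \<Longrightarrow> l < card A \<Longrightarrow> x k < x l"
proof
  show "sorted_list_of_set A ! k \<in> A" if "k < card A" for k
    using assms that nth_mem[of k "sorted_list_of_set A"] by simp
  show "sorted_list_of_set A ! k < sorted_list_of_set A ! l" if "k < l" "l < card A" for k l
    using sorted_wrt_nth_less[OF strict_sorted_list_of_set that(1)] that(2) by simp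
qed

lemma row_complexity_critical_le:
  assumes crit: "critical (Av {Q1, Q2}) M"
  shows "row_complexity M i \<le> 4"
proof (rule ccontr)
  let ?S = "supp M"
  define T where "T = {j \<in> {1..ncols M}. (i, j) \<notin> ?S \<and> (j = 1 \<or> (i, j - 1) \<in> ?S)}"
  assume "\<not> row_complexity M i \<le> 4"
  then have card_T: "4 < card T"
    unfolding row_complexity_def T_def by simp
  have "finite T"
    by (simp add: T_def)
  then obtain x where x_T: "\<And>k. k < card T \<Longrightarrow> x k \<in> T"
    and x_less: "\<And>k l. k < l \<Longrightarrow> l < card T \<Longrightarrow> x k < x l"
    by (rule finite_enumerate_increasing) blast
  note wf = critical_Av_Q1_Q2D(1)[OF crit] and free = critical_Av_Q1_Q2D(2)[OF crit]
  have start: "1 < x k" "(i, x k - 1) \<in> ?S" "\<not> fork_free (insert (i, Suc (x k - 1)) ?S)"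
    if "0 < k" "k \<le> 4" for k
  proof -
    show "1 < x k"
      using x_T[of 0] x_less[of 0 k] that card_T by (auto simp: T_def)
    then show entry: "(i, x k - 1) \<in> ?S"
      using x_T[of k] that card_T by (auto simp: T_def)
    have "i \<in> {1..nrows M}"
      using wf entry by (auto simp: wf_bmat_def)
    then show "\<not> fork_free (insert (i, Suc (x k - 1)) ?S)"
      using critical_Av_Q1_Q2D(3)[OF crit, of i "x k"] x_T[of k] \<open>1 < x k\<close> that card_T
      by (auto simp: T_def)
  qed
  have less: "x k - 1 < x l - 1" if "0 < k" "k < l" "l \<le> 4" for k l
    using x_less[of k l] start(1)[of k] that card_T by simp
  have mid: "(i, x 2 - 1) \<in> ?S" "x 1 - 1 < x 2 - 1" "x 2 - 1 < x 3 - 1"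
    using start(2)[of 2] less[of 1 2] less[of 2 3] by simp_all
  obtain a where a: "(a, x 1 - 1) \<in> ?S" "i < a"
    using row_gap_forces_entries_below[OF free, of i "x 1 - 1" "x 2 - 1"]
      start(2,3)[of 1] mid(1,2) by auto
  obtain a3 a' b' where a3: "(a3, x 3 - 1) \<in> ?S" "i < a3" "(a', b') \<in> ?S" "i < a'"
    "x 3 - 1 < b'" "a3 \<noteq> a'"
    using row_gap_forces_entries_below[OF free, of i "x 3 - 1" "x 4 - 1"]
      start(2,3)[of 3] start(2)[of 4] less[of 3 4] by auto
  have "a = a3"
    using fork_freeD[OF free mid(1) a(1) a3(1)] a(2) a3(2) mid(2,3) by simp
  moreover have "a = a'"
    using fork_freeD[OF free mid(1) a(1) a3(3)] a(2) a3(4,5) mid(2,3) by simp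
  ultimately show False
    using a3(6) by simp
qed

lemma col_complexity_critical_le:
  assumes crit: "critical (Av {Q1, Q2}) M"
  shows "col_complexity M j \<le> 3"
proof (rule ccontr)
  let ?S = "supp M"
  define T where "T = {i \<in> {1..nrows M}. (i, j) \<notin> ?S \<and> (i = 1 \<or> (i - 1, j) \<in> ?S)}"
  assume "\<not> col_complexity M j \<le> 3"
  then have card_T: "3 < card T"
    unfolding col_complexity_def T_def by simp
  have "finite T"
    by (simp add: T_def)
  then obtain x where x_T: "\<And>k. k < card T \<Longrightarrow> x k \<in> T"
    and x_less: "\<And>k l. k < l \<Longrightarrow> l < card T \<Longrightarrow> x k < x l"
    by (rule finite_enumerate_increasing) blast
  note wf = critical_Av_Q1_Q2D(1)[OF crit] and free = critical_Av_Q1_Q2D(2)[OF crit]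
  have start: "1 < x k" "(x k - 1, j) \<in> ?S" "(x k, j) \<notin> ?S" if "0 < k" "k \<le> 3" for k
  proof -
    show "1 < x k"
      using x_T[of 0] x_less[of 0 k] that card_T by (auto simp: T_def)
    then show "(x k - 1, j) \<in> ?S" "(x k, j) \<notin> ?S"
      using x_T[of k] that card_T by (auto simp: T_def)
  qed
  have "j \<in> {1..ncols M}"
    using wf start(2)[of 1] by (auto simp: wf_bmat_def)
  then have gap: "\<not> fork_free (insert (Suc (x 1 - 1), j) ?S)"
    using critical_Av_Q1_Q2D(3)[OF crit, of "x 1" j] x_T[of 1] start[of 1] card_T
    by (auto simp: T_def)
  have "x 1 \<noteq> x 2 - 1" "x 1 \<noteq> x 3 - 1"
    using start(3)[of 1] start(2)[of 2] start(2)[of 3] by auto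
  then have below: "Suc (x 1 - 1) < x 2 - 1" "Suc (x 1 - 1) < x 3 - 1" "x 2 - 1 \<noteq> x 3 - 1"
    using x_less[of 1 2] x_less[of 1 3] x_less[of 2 3] start(1)[of 1] start(1)[of 2] card_T
    by simp_all
  show False
    using column_gap_entries_below_same_row[OF free start(2)[of 1] gap start(2)[of 2]
        start(2)[of 3] below(1,2)] below(3) by simp
qed

theorem proposition4p3:
  shows "bounded_class (Av {Q1, Q2})"
  unfolding bounded_class_def
proof (intro exI[of _ 4] allI impI conjI ballI)
  fix M i j
  assume crit: "critical (Av {Q1, Q2}) M"
  show "row_complexity M i \<le> 4"
    using row_complexity_critical_le[OF crit] .
  show "col_complexity M j \<le> 4"
    using col_complexity_critical_le[OF crit, of j] by simp
qed

end
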